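(* (a) There is a unique $p_0\in(0,1/2)$ with $\log\left(\frac{1-p_0}{p_0}\right)=\frac{1-p_0}{1-2p_0}$. Moreover, if $0<p\le p_0$ then $\log\left(\frac{1-p}{p}\right)\ge\frac{1-p}{1-2p}$. (b) Given $p\in(0,1)$, there is a unique $s_0\in(0,1)$ with $(1-p)(2-s_0)=\exp(1/s_0)(1-s_0)$. Moreover, if $p>1/2$ then $s_0>2-p^{-1}$, and if $p_0<p\le1/2$ then $s_0>\frac{1-2p}{1-p}$, where $p_0$ is as in (a). *)

theory Defs
  imports Complex_Main
begin

end

theory Submission
  imports Defs
begin

text \<open>The gap \<open>ln ((1 - p)/p) - (1 - p)/(1 - 2p)\<close> is strictly decreasing on \<open>(0, 1/2)\<close> and
\<open>exp (1/s) (1 - s)/(2 - s)\<close> is strictly decreasing on \<open>(0, 1]\<close>, so both equations have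
exactly one root by the intermediate value theorem.  For the bounds on \<open>s\<^sub>0\<close>: at
\<open>t = (1 - 2q)/(1 - q)\<close> the second function takes the value \<open>exp ((1 - q)/(1 - 2q)) q\<close>.
With \<open>q = 1 - p\<close> (so \<open>t = 2 - 1/p\<close>) this exceeds \<open>1 - p\<close> trivially; with \<open>q = p\<close> it
exceeds \<open>1 - p\<close> exactly when the gap at \<open>p\<close> is negative, i.e. when \<open>p > p\<^sub>0\<close>.
Since the function equals \<open>1 - p\<close> at \<open>s\<^sub>0\<close>, monotonicity gives \<open>s\<^sub>0 > t\<close>.\<close>

definition odds_gap :: "real \<Rightarrow> real" where
  "odds_gap p = ln ((1 - p) / p) - (1 - p) / (1 - 2*p)"

lemma odds_gap_strict_antimono:
  assumes "0 < p" "p < q" "q < 1/2"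
  shows "odds_gap q < odds_gap p"
proof -
  have "ln ((1 - q) / q) < ln ((1 - p) / p)"
    using assms by (simp add: field_simps)
  moreover have "(1 - p) / (1 - 2*p) < (1 - q) / (1 - 2*q)"
    using assms by (simp add: field_simps)
  ultimately show ?thesis
    unfolding odds_gap_def by simp
qed

lemma odds_gap_root_exists: "\<exists>p0. 0 < p0 \<and> p0 < 1/2 \<and> odds_gap p0 = 0"
proof -
  define a where "a = 1 / (1 + exp (2::real))"
  define b where "b = (2/5::real)"
  have e2: "exp (2::real) \<ge> 3"
    using exp_ge_add_one_self[of 2] by simp
  have a_pos: "0 < a" and a_less_b: "a < b"
    unfolding a_def b_def using e2 by (simp_all add: add_pos_pos field_simps)
  have e2_pos: "0 < 1 + exp (2::real)"
    using exp_gt_zero[of 2] by linarith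
  have one_minus_a: "1 - a = exp 2 / (1 + exp 2)"
    unfolding a_def using e2_pos by (simp add: field_simps)
  have "(1 - a) / a = exp 2"
    unfolding one_minus_a unfolding a_def using e2_pos by simp
  then have "ln ((1 - a) / a) = 2"
    by simp
  moreover have "1 - 2*a = (exp 2 - 1) / (1 + exp 2)"
    unfolding a_def using e2_pos by (simp add: field_simps)
  then have "(1 - a) / (1 - 2*a) = exp 2 / (exp 2 - 1)"
    unfolding one_minus_a using e2_pos by simp
  moreover have "exp 2 / (exp 2 - 1) \<le> (2::real)"
    using e2 by (simp add: field_simps)
  ultimately have "odds_gap a \<ge> 0"
    unfolding odds_gap_def by simp
  moreover have "odds_gap b \<le> 0"
    using ln_le_minus_one[of "3/2"] unfolding odds_gap_def b_def by simp
  moreover have "continuous_on {a..b} odds_gap"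
    unfolding odds_gap_def using a_pos a_less_b
    by (intro continuous_intros) (auto simp: b_def field_simps)
  ultimately obtain x where "a \<le> x" "x \<le> b" "odds_gap x = 0"
    using IVT2'[of odds_gap b 0 a] a_less_b by auto
  then show ?thesis
    using a_pos unfolding b_def by (intro exI[of _ x]) auto
qed

lemma odds_gap_eq_0_iff: "odds_gap p = 0 \<longleftrightarrow> ln ((1 - p) / p) = (1 - p) / (1 - 2*p)"
  unfolding odds_gap_def by simp

lemma log_odds_root_unique:
  "\<exists>!p0::real. 0 < p0 \<and> p0 < 1/2 \<and> ln ((1 - p0) / p0) = (1 - p0) / (1 - 2*p0)"
proof -
  obtain p0 where p0: "0 < p0" "p0 < 1/2" "odds_gap p0 = 0"
    using odds_gap_root_exists by blast
  have "q = p0" if "0 < q" "q < 1/2" "odds_gap q = 0" for q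
    using odds_gap_strict_antimono[of q p0] odds_gap_strict_antimono[of p0 q] that p0
    by (cases q p0 rule: linorder_cases) auto
  with p0 show ?thesis
    unfolding odds_gap_eq_0_iff[symmetric] by blast
qed

lemma log_odds_ge_below_root:
  fixes p p0 :: real
  assumes "p0 < 1/2" "ln ((1 - p0) / p0) = (1 - p0) / (1 - 2*p0)" "0 < p" "p \<le> p0"
  shows "ln ((1 - p) / p) \<ge> (1 - p) / (1 - 2*p)"
proof -
  have "odds_gap p \<ge> odds_gap p0"
    using odds_gap_strict_antimono[of p p0] assms by (cases "p = p0") auto
  with assms(2) show ?thesis
    unfolding odds_gap_def by simp
qed

lemma log_odds_less_above_root:
  fixes p p0 :: real
  assumes "0 < p0" "ln ((1 - p0) / p0) = (1 - p0) / (1 - 2*p0)" "p0 < p" "p < 1/2"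
  shows "ln ((1 - p) / p) < (1 - p) / (1 - 2*p)"
  using odds_gap_strict_antimono[OF assms(1,3,4)] assms(2) unfolding odds_gap_def by simp

definition exp_ratio :: "real \<Rightarrow> real" where
  "exp_ratio s = exp (1/s) * (1 - s) / (2 - s)"

lemma exp_ratio_strict_antimono:
  assumes "0 < s" "s < t" "t \<le> 1"
  shows "exp_ratio t < exp_ratio s"
proof -
  have "exp (1/t) * ((1 - t) / (2 - t)) \<le> exp (1/t) * ((1 - s) / (2 - s))"
    using assms by (intro mult_left_mono) (simp_all add: field_simps)
  also have "\<dots> < exp (1/s) * ((1 - s) / (2 - s))"
    using assms by (intro mult_strict_right_mono) (simp_all add: field_simps)
  finally show ?thesis
    unfolding exp_ratio_def by simp
qed

lemma exp_ratio_eq_iff: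
  fixes p s :: real
  assumes "s < 1"
  shows "(1 - p) * (2 - s) = exp (1 / s) * (1 - s) \<longleftrightarrow> exp_ratio s = 1 - p"
  using assms unfolding exp_ratio_def by (auto simp: field_simps)

lemma exp_ratio_root_unique:
  assumes "0 < c" "c < 1"
  shows "\<exists>!s. 0 < s \<and> s < 1 \<and> exp_ratio s = c"
proof -
  have "exp_ratio (1/2) \<ge> 1"
    using exp_ge_add_one_self[of 2] by (simp add: exp_ratio_def)
  moreover have "exp_ratio 1 = 0"
    unfolding exp_ratio_def by simp
  moreover have "continuous_on {1/2..1} exp_ratio"
    unfolding exp_ratio_def by (intro continuous_intros) auto
  ultimately obtain s where s: "1/2 \<le> s" "s \<le> 1" "exp_ratio s = c"
    using IVT2'[of exp_ratio 1 c "1/2"] assms by auto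
  with assms have "s < 1"
    using \<open>exp_ratio 1 = 0\<close> by (cases "s = 1") auto
  moreover have "t = s" if "0 < t" "t < 1" "exp_ratio t = c" for t
    using exp_ratio_strict_antimono[of t s] exp_ratio_strict_antimono[of s t] that s
    by (cases t s rule: linorder_cases) auto
  ultimately show ?thesis
    using s by (intro ex1I[of _ s]) auto
qed

lemma exp_equation_root_unique:
  fixes p :: real
  assumes "0 < p" "p < 1"
  shows "\<exists>!s0. 0 < s0 \<and> s0 < 1 \<and> (1 - p) * (2 - s0) = exp (1 / s0) * (1 - s0)"
proof -
  have "{s. 0 < s \<and> s < 1 \<and> (1 - p) * (2 - s) = exp (1 / s) * (1 - s)}
      = {s. 0 < s \<and> s < 1 \<and> exp_ratio s = 1 - p}"
    using exp_ratio_eq_iff by auto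
  then show ?thesis
    using exp_ratio_root_unique[of "1 - p"] assms by (simp add: set_eq_iff)
qed

lemma exp_ratio_at_odds:
  fixes q :: real
  assumes "q \<noteq> 1"
  shows "exp_ratio ((1 - 2*q) / (1 - q)) = exp ((1 - q) / (1 - 2*q)) * q"
proof -
  have "(1 - (1 - 2*q) / (1 - q)) / (2 - (1 - 2*q) / (1 - q)) = q"
    using assms by (simp add: field_simps)
  then show ?thesis
    unfolding exp_ratio_def by (simp flip: times_divide_eq_right)
qed

lemma exp_ratio_root_gt:
  assumes "0 < q" "q < 1/2" "0 < s" "s < 1" "exp_ratio s = c"
    and "c < exp ((1 - q) / (1 - 2*q)) * q"
  shows "s > (1 - 2*q) / (1 - q)"
proof (rule ccontr)
  let ?t = "(1 - 2*q) / (1 - q)"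
  assume "\<not> s > ?t"
  moreover have "0 < ?t" "?t < 1"
    using assms(1,2) by (simp_all add: field_simps)
  ultimately have "exp_ratio ?t \<le> exp_ratio s"
    using exp_ratio_strict_antimono[of s ?t] assms(3) by (cases "s = ?t") auto
  with assms(5,6) show False
    using exp_ratio_at_odds[of q] assms(2) by simp
qed

lemma root_gt_of_large_p:
  fixes p s0 :: real
  assumes "1/2 < p" "p < 1" "0 < s0" "s0 < 1" "(1 - p) * (2 - s0) = exp (1 / s0) * (1 - s0)"
  shows "s0 > 2 - 1 / p"
proof -
  have "1 < exp ((1 - (1 - p)) / (1 - 2*(1 - p)))"
    using assms(1) by simp
  then have "1 - p < exp ((1 - (1 - p)) / (1 - 2*(1 - p))) * (1 - p)"
    using assms(2) by simp
  then have "s0 > (1 - 2*(1 - p)) / (1 - (1 - p))"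
    using assms by (intro exp_ratio_root_gt[of "1 - p" s0 "1 - p"]) (simp_all add: exp_ratio_eq_iff)
  with assms(1) show ?thesis
    by (simp add: field_simps)
qed

lemma root_gt_of_moderate_p:
  fixes p0 p s0 :: real
  assumes "0 < p0" "ln ((1 - p0) / p0) = (1 - p0) / (1 - 2*p0)" "p0 < p" "p \<le> 1/2"
    and "0 < s0" "s0 < 1" "(1 - p) * (2 - s0) = exp (1 / s0) * (1 - s0)"
  shows "s0 > (1 - 2*p) / (1 - p)"
proof (cases "p = 1/2")
  case False
  then have p: "0 < p" "p < 1/2"
    using assms(1,3,4) by auto
  have "(1 - p) / p = exp (ln ((1 - p) / p))"
    using p by simp
  also have "\<dots> < exp ((1 - p) / (1 - 2*p))"
    using log_odds_less_above_root[OF assms(1-3) p(2)] by (rule exp_less_mono)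
  finally have "1 - p < exp ((1 - p) / (1 - 2*p)) * p"
    using p by (simp add: divide_less_eq)
  then show ?thesis
    using assms p by (intro exp_ratio_root_gt[of p s0 "1 - p"]) (simp_all add: exp_ratio_eq_iff)
next
  case True
  show ?thesis
    unfolding True using assms(5) by simp
qed

theorem lemma16:
  shows "(\<exists>!p0::real. 0 < p0 \<and> p0 < 1/2 \<and> ln ((1 - p0) / p0) = (1 - p0) / (1 - 2*p0))
    \<and> (\<forall>p0 p::real. 0 < p0 \<and> p0 < 1/2 \<and> ln ((1 - p0) / p0) = (1 - p0) / (1 - 2*p0)
          \<and> 0 < p \<and> p \<le> p0 \<longrightarrow> ln ((1 - p) / p) \<ge> (1 - p) / (1 - 2*p))
    \<and> (\<forall>p::real. 0 < p \<and> p < 1 \<longrightarrow>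
          (\<exists>!s0::real. 0 < s0 \<and> s0 < 1 \<and> (1 - p) * (2 - s0) = exp (1 / s0) * (1 - s0)))
    \<and> (\<forall>p s0::real. 0 < p \<and> p < 1 \<and> 0 < s0 \<and> s0 < 1
          \<and> (1 - p) * (2 - s0) = exp (1 / s0) * (1 - s0) \<and> p > 1/2 \<longrightarrow> s0 > 2 - 1 / p)
    \<and> (\<forall>p0 p s0::real. 0 < p0 \<and> p0 < 1/2 \<and> ln ((1 - p0) / p0) = (1 - p0) / (1 - 2*p0)
          \<and> p0 < p \<and> p \<le> 1/2 \<and> 0 < s0 \<and> s0 < 1
          \<and> (1 - p) * (2 - s0) = exp (1 / s0) * (1 - s0) \<longrightarrow> s0 > (1 - 2*p) / (1 - p))"
  using log_odds_root_unique log_odds_ge_below_root exp_equation_root_unique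
    root_gt_of_large_p root_gt_of_moderate_p
  by (intro conjI allI impI) blast+

end
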